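(* Let $q$ be a prime power, $\alpha$ an element of multiplicative order $n$ in $\mathbb{F}_{q^s}$, and $\beta$ an element of multiplicative order $n_\ell$ in $\mathbb{F}_{q_\ell^{s_\ell}}$, where $\mathbb{F}_{q_\ell}=\mathbb{F}_{q^u}$; let $r=\mathrm{lcm}(s,us_\ell)$, so both lie in $\mathbb{F}_{q^r}$. Let $\mathcal{Z}\subseteq\{0,1,\dots,n_\ell-1\}$. If $\gcd(n,n_\ell)=1$, then for all $i,j\in\{0,1,\dots,n-1\}$ with $i\ne j$, $$\gcd\Big(\prod_{m\in\mathcal{Z}}(1-x\alpha^i\beta^m),\ \prod_{m\in\mathcal{Z}}(1-x\alpha^j\beta^m)\Big)=1$$ in $\mathbb{F}_{q^r}[x]$. *)

theory Defs
  imports "HOL-Computational_Algebra.Computational_Algebra"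
begin

definition mult_order :: "'a::field \<Rightarrow> nat" where
  "mult_order a = (if \<exists>n>0. a ^ n = 1 then (LEAST n. n > 0 \<and> a ^ n = 1) else 0)"

definition prime_power :: "nat \<Rightarrow> bool" where
  "prime_power q \<longleftrightarrow> (\<exists>p k. prime p \<and> k > 0 \<and> q = p ^ k)"

end

theory Submission
  imports Defs "HOL-Number_Theory.Cong"
begin

text \<open>The roots of the factors are the points \<open>\<alpha>\<^sup>i \<beta>\<^sup>m\<close>, and two of them coincide only if
  \<open>i \<equiv> j (mod n)\<close>: raising \<open>\<alpha>\<^sup>i \<beta>\<^sup>m = \<alpha>\<^sup>j \<beta>\<^sup>m'\<close> to the power \<open>n\<^sub>l\<close> kills \<beta> and gives
  \<open>\<alpha>\<^bsup>i n\<^sub>l\<^esup> = \<alpha>\<^bsup>j n\<^sub>l\<^esup>\<close>, and \<open>n\<^sub>l\<close> is invertible modulo \<open>n\<close>. So for \<open>i \<noteq> j\<close> the two products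
  have disjoint sets of roots, and distinct linear factors are coprime.\<close>

lemma mult_order_power_eq_one:
  fixes a :: "'a::field"
  assumes "mult_order a > 0"
  shows "a ^ mult_order a = 1"
proof -
  have "\<exists>n>0. a ^ n = 1"
    using assms unfolding mult_order_def by (auto split: if_splits)
  then show ?thesis
    unfolding mult_order_def by (simp add: LeastI_ex[of "\<lambda>n. n > 0 \<and> a ^ n = 1"])
qed

lemma mult_order_le:
  fixes a :: "'a::field"
  assumes "a ^ k = 1" "k > 0"
  shows "mult_order a \<le> k"
  using assms unfolding mult_order_def by (auto intro: Least_le)

lemma power_mod_mult_order:
  fixes a :: "'a::field"
  assumes "mult_order a > 0"
  shows "a ^ (k mod mult_order a) = a ^ k"
proof -
  let ?n = "mult_order a"
  have "a ^ k = a ^ (?n * (k div ?n) + k mod ?n)"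
    by simp
  also have "\<dots> = (a ^ ?n) ^ (k div ?n) * a ^ (k mod ?n)"
    by (simp only: power_add power_mult)
  finally have "a ^ k = (a ^ ?n) ^ (k div ?n) * a ^ (k mod ?n)" .
  then show ?thesis
    using mult_order_power_eq_one[OF assms] by simp
qed

lemma inj_on_power_mult_order:
  fixes a :: "'a::field"
  assumes "mult_order a > 0"
  shows "inj_on (\<lambda>k. a ^ k) {..<mult_order a}"
proof -
  have a: "a \<noteq> 0"
    using mult_order_power_eq_one[OF assms] assms by (metis power_0_left less_not_refl2 zero_neq_one)
  have "x = y" if "x \<le> y" "y < mult_order a" "a ^ x = a ^ y" for x y
  proof (rule ccontr)
    assume "x \<noteq> y"
    have "a ^ x * a ^ (y - x) = a ^ x * 1"
      using that by (metis le_add_diff_inverse mult.right_neutral power_add)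
    then have "a ^ (y - x) = 1"
      using a by simp
    then have "mult_order a \<le> y - x"
      using \<open>x \<noteq> y\<close> \<open>x \<le> y\<close> by (intro mult_order_le) auto
    then show False
      using \<open>y < mult_order a\<close> by linarith
  qed
  then show ?thesis
    by (intro inj_onI) (metis lessThan_iff nat_le_linear)
qed

lemma power_eq_power_iff_cong_mult_order:
  fixes a :: "'a::field"
  assumes "mult_order a > 0"
  shows "a ^ k = a ^ l \<longleftrightarrow> [k = l] (mod mult_order a)"
proof -
  have "a ^ k = a ^ l \<longleftrightarrow> a ^ (k mod mult_order a) = a ^ (l mod mult_order a)"
    using power_mod_mult_order[OF assms] by simp
  also have "\<dots> \<longleftrightarrow> k mod mult_order a = l mod mult_order a"
    using inj_on_power_mult_order[OF assms] assms by (auto dest: inj_onD)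
  finally show ?thesis
    unfolding cong_def .
qed

lemma power_mult_power_eq_imp_cong:
  fixes \<alpha> \<beta> :: "'a::field"
  assumes "mult_order \<alpha> > 0" "\<beta> ^ N = 1" "coprime N (mult_order \<alpha>)"
    and "\<alpha> ^ i * \<beta> ^ m = \<alpha> ^ j * \<beta> ^ m'"
  shows "[i = j] (mod mult_order \<alpha>)"
proof -
  have \<beta>: "(\<beta> ^ k) ^ N = 1" for k
    by (metis assms(2) mult.commute power_mult power_one)
  have "\<alpha> ^ (i * N) = (\<alpha> ^ i * \<beta> ^ m) ^ N"
    by (simp add: \<beta> power_mult_distrib power_mult)
  also have "\<dots> = (\<alpha> ^ j * \<beta> ^ m') ^ N"
    using assms(4) by simp
  also have "\<dots> = \<alpha> ^ (j * N)"
    by (simp add: \<beta> power_mult_distrib power_mult)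
  finally have "[i * N = j * N] (mod mult_order \<alpha>)"
    using power_eq_power_iff_cong_mult_order[OF assms(1)] by blast
  then show ?thesis
    using cong_mult_rcancel_nat[OF assms(3)] by blast
qed

lemma coprime_linear_poly:
  fixes a b :: "'a::field_gcd"
  assumes "a \<noteq> b"
  shows "coprime [:1, - a:] [:1, - b:]"
proof (rule coprimeI)
  fix c
  assume "c dvd [:1, - a:]" "c dvd [:1, - b:]"
  then have "c dvd smult b [:1, - a:] - smult a [:1, - b:]"
    by (intro dvd_diff dvd_smult)
  also have "smult b [:1, - a:] - smult a [:1, - b:] = [:b - a:]"
    by simp
  finally show "is_unit c"
    using assms by (auto simp: is_unit_const_poly_iff dvd_field_iff intro: dvd_unit_imp_unit)
qed

text \<open>Only the orders of \<alpha> and \<beta> matter.\<close>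

theorem lemma3:
  fixes \<alpha> \<beta> :: "'a::{finite,field_gcd}"
    and q s u s\<^sub>l n n\<^sub>l r :: nat
    and Z :: "nat set"
  assumes q: "prime_power q"
    and pos: "s > 0" "u > 0" "s\<^sub>l > 0"
    and r: "r = lcm s (u * s\<^sub>l)"
    and card: "card (UNIV :: 'a set) = q ^ r"
    and alpha_in: "\<alpha> ^ (q ^ s) = \<alpha>"
    and beta_in: "\<beta> ^ ((q ^ u) ^ s\<^sub>l) = \<beta>"
    and ord_alpha: "mult_order \<alpha> = n" and n: "n > 0"
    and ord_beta: "mult_order \<beta> = n\<^sub>l" and nl: "n\<^sub>l > 0"
    and Z: "Z \<subseteq> {0..<n\<^sub>l}"
    and cop: "gcd n n\<^sub>l = 1"
    and ij: "i < n" "j < n" "i \<noteq> j"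
  shows "gcd (\<Prod>m\<in>Z. [:1, - (\<alpha> ^ i * \<beta> ^ m):])
             (\<Prod>m\<in>Z. [:1, - (\<alpha> ^ j * \<beta> ^ m):]) = 1"
proof -
  have "\<beta> ^ n\<^sub>l = 1"
    using mult_order_power_eq_one[of \<beta>] ord_beta nl by simp
  moreover have "coprime n\<^sub>l (mult_order \<alpha>)"
    using cop ord_alpha by (simp add: coprime_iff_gcd_eq_1 gcd.commute)
  ultimately have roots_distinct: "\<alpha> ^ i * \<beta> ^ m \<noteq> \<alpha> ^ j * \<beta> ^ m'" for m m'
    using power_mult_power_eq_imp_cong[of \<alpha> \<beta> n\<^sub>l i m j m'] cong_less_imp_eq_nat[of i n j]
      ord_alpha n ij by auto
  have "coprime (\<Prod>m\<in>Z. [:1, - (\<alpha> ^ i * \<beta> ^ m):]) (\<Prod>m\<in>Z. [:1, - (\<alpha> ^ j * \<beta> ^ m):])"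
    by (intro prod_coprime_left prod_coprime_right coprime_linear_poly roots_distinct)
  then show ?thesis
    by (simp add: coprime_iff_gcd_eq_1)
qed

end
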